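(* Let $p$ be a prime, $P$ a finite $p$-group, $X$ a set in bijection with $P$, and $G$ the symmetric group on $X$. Regard $P$ as a subgroup of $G$ via the Cayley embedding (the regular permutation representation of $P$ on $X\cong P$). Then the image of ${\rm Res}^G_P\colon H^*(G)\to H^*(P)$ is contained in $I(P,{\cal C}_u)$.
   Context: $H^*(\cdot)$ denotes group cohomology with coefficients in ${\bf F}_p$ (trivial action). ${\cal C}_u={\cal C}_u(P)$ is the category whose objects are the subgroups of $P$ and whose morphisms are all injective group homomorphisms between them. $I(P,{\cal C}_u)$ is the subring of $H^*(P)$ consisting of those $x$ such that for every injective homomorphism $\phi\colon Q\to Q'$ between subgroups of $P$, $\phi^*({\rm Res}^P_{Q'}x)={\rm Res}^P_Q x$ (equivalently, the limit of $H^*$ over ${\cal C}_u$). *)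

theory Defs
  imports "HOL-Algebra.Algebra"
begin

text \<open>Group cohomology H^n(G; F_p) with trivial coefficients, via the standard
 inhomogeneous cochain complex (bar resolution).  An n-cochain is represented by a
 function on lists; only its values on n-tuples of group elements matter, and values
 are read in F_p = Z/pZ, i.e. modulo p.\<close>

definition tuples :: "('g, 'b) monoid_scheme \<Rightarrow> nat \<Rightarrow> 'g list set" where
  "tuples G n = {gs. length gs = n \<and> set gs \<subseteq> carrier G}"

definition coboundary :: "('g, 'b) monoid_scheme \<Rightarrow> nat \<Rightarrow> ('g list \<Rightarrow> int) \<Rightarrow> 'g list \<Rightarrow> int" where
  "coboundary G n f = (\<lambda>gs. f (tl gs)
     + (\<Sum>i<n. (-1) ^ (i + 1) * f (take i gs @ [gs ! i \<otimes>\<^bsub>G\<^esub> gs ! (i + 1)] @ drop (i + 2) gs))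
     + (-1) ^ (n + 1) * f (take n gs))"

definition is_cocycle :: "('g, 'b) monoid_scheme \<Rightarrow> nat \<Rightarrow> nat \<Rightarrow> ('g list \<Rightarrow> int) \<Rightarrow> bool" where
  "is_cocycle G p n f \<longleftrightarrow> (\<forall>gs \<in> tuples G (Suc n). coboundary G n f gs mod int p = 0)"

definition is_coboundary :: "('g, 'b) monoid_scheme \<Rightarrow> nat \<Rightarrow> nat \<Rightarrow> ('g list \<Rightarrow> int) \<Rightarrow> bool" where
  "is_coboundary G p n f \<longleftrightarrow> (case n of
      0 \<Rightarrow> (\<forall>gs \<in> tuples G 0. f gs mod int p = 0)
    | Suc m \<Rightarrow> (\<exists>h. \<forall>gs \<in> tuples G n. (f gs - coboundary G m h gs) mod int p = 0))"

definition cohom_class :: "('g, 'b) monoid_scheme \<Rightarrow> nat \<Rightarrow> nat \<Rightarrow> ('g list \<Rightarrow> int) \<Rightarrow> ('g list \<Rightarrow> int) set" where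
  "cohom_class G p n f = {g. is_cocycle G p n g \<and> is_coboundary G p n (\<lambda>gs. f gs - g gs)}"

definition Hcoh :: "('g, 'b) monoid_scheme \<Rightarrow> nat \<Rightarrow> nat \<Rightarrow> ('g list \<Rightarrow> int) set set" where
  "Hcoh G p n = {cohom_class G p n f | f. is_cocycle G p n f}"

definition induced :: "nat \<Rightarrow> nat \<Rightarrow> ('k, 'c) monoid_scheme \<Rightarrow> ('k \<Rightarrow> 'g) \<Rightarrow> ('g, 'b) monoid_scheme
    \<Rightarrow> ('g list \<Rightarrow> int) set \<Rightarrow> ('k list \<Rightarrow> int) set" where
  "induced p n K h G x = cohom_class K p n
     (\<lambda>ks. (SOME f. is_cocycle G p n f \<and> x = cohom_class G p n f) (map h ks))"

definition Res :: "nat \<Rightarrow> nat \<Rightarrow> ('g, 'b) monoid_scheme \<Rightarrow> 'g set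
    \<Rightarrow> ('g list \<Rightarrow> int) set \<Rightarrow> ('g list \<Rightarrow> int) set" where
  "Res p n P Q x = induced p n (P\<lparr>carrier := Q\<rparr>) id P x"

definition I_Cu :: "('g, 'b) monoid_scheme \<Rightarrow> nat \<Rightarrow> nat \<Rightarrow> ('g list \<Rightarrow> int) set set" where
  "I_Cu P p n = {x \<in> Hcoh P p n. \<forall>Q Q' \<phi>.
      subgroup Q P \<and> subgroup Q' P \<and> \<phi> \<in> hom (P\<lparr>carrier := Q\<rparr>) (P\<lparr>carrier := Q'\<rparr>) \<and> inj_on \<phi> Q
      \<longrightarrow> induced p n (P\<lparr>carrier := Q\<rparr>) \<phi> (P\<lparr>carrier := Q'\<rparr>) (Res p n P Q' x) = Res p n P Q x}"

definition cayley :: "('g, 'b) monoid_scheme \<Rightarrow> ('g \<Rightarrow> 'a) \<Rightarrow> 'a set \<Rightarrow> 'g \<Rightarrow> 'a \<Rightarrow> 'a" where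
  "cayley P e Y g = restrict (\<lambda>y. e (g \<otimes>\<^bsub>P\<^esub> inv_into (carrier P) e y)) Y"

end

theory Submission
  imports Defs
begin

text \<open>
  Let \<open>c : P \<rightarrow> Sym(S)\<close> be the Cayley embedding.  For an injective homomorphism
  \<open>\<phi> : Q \<rightarrow> Q'\<close> between subgroups of \<open>P\<close>, the homomorphisms \<open>c|Q\<close> and \<open>c \<circ> \<phi>\<close> from \<open>Q\<close>
  to \<open>Sym(S)\<close> are conjugate: both turn \<open>P\<close> into a free \<open>Q\<close>-set with \<open>|P|/|Q|\<close> orbits, so
  there is a bijection \<open>\<psi>\<close> of \<open>P\<close> with \<open>\<psi>(q x) = \<phi>(q) \<psi>(x)\<close>, and \<open>\<psi>\<close> transported along
  \<open>e\<close> is the conjugating permutation.  Inner automorphisms act trivially on cohomology, hence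
  \<open>c|Q\<close> and \<open>c \<circ> \<phi>\<close> induce the same map \<open>H\<^sup>n(Sym S) \<rightarrow> H\<^sup>n(Q)\<close>; by functoriality this is
  the stability condition defining \<open>I(P, C\<^sub>u)\<close>.
\<close>

text \<open>
  Lists \<open>[x\<^sub>0, \<dots>, x\<^sub>n]\<close> are simplices: \<open>omit j\<close> is the \<open>j\<close>-th face and \<open>alt_faces F\<close> the
  alternating sum of \<open>F\<close> over all faces (the simplicial coboundary of \<open>F\<close>).
\<close>
definition omit :: "nat \<Rightarrow> 'a list \<Rightarrow> 'a list" where
  "omit j xs = take j xs @ drop (Suc j) xs"

definition alt_faces :: "('a list \<Rightarrow> int) \<Rightarrow> 'a list \<Rightarrow> int" where
  "alt_faces F xs = (\<Sum>j<length xs. (-1) ^ j * F (omit j xs))"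

text \<open>
  The prism operator of a vertex map \<open>r\<close>: \<open>prism r i xs\<close> is the \<open>i\<close>-th simplex
  \<open>[x\<^sub>0, \<dots>, x\<^sub>i, r x\<^sub>i, \<dots>, r x\<^sub>n]\<close> of the standard triangulation of the prism over \<open>xs\<close>.
\<close>
definition prism :: "('a \<Rightarrow> 'a) \<Rightarrow> nat \<Rightarrow> 'a list \<Rightarrow> 'a list" where
  "prism r i xs = take (Suc i) xs @ map r (drop i xs)"

definition prism_op :: "('a \<Rightarrow> 'a) \<Rightarrow> ('a list \<Rightarrow> int) \<Rightarrow> 'a list \<Rightarrow> int" where
  "prism_op r F xs = (\<Sum>i<length xs. (-1) ^ i * F (prism r i xs))"

lemma alt_faces_Nil [simp]: "alt_faces F [] = 0"
  by (simp add: alt_faces_def)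

lemma prism_op_Nil [simp]: "prism_op r F [] = 0"
  by (simp add: prism_op_def)

lemma alt_faces_Cons: "alt_faces F (a # xs) = F xs - alt_faces (\<lambda>l. F (a # l)) xs"
  unfolding alt_faces_def
  by (simp only: length_Cons sum.lessThan_Suc_shift) (simp add: omit_def sum_negf[symmetric])

lemma prism_op_Cons:
  "prism_op r F (a # xs) = F (a # r a # map r xs) - prism_op r (\<lambda>l. F (a # l)) xs"
  unfolding prism_op_def
  by (simp only: length_Cons sum.lessThan_Suc_shift) (simp add: prism_def sum_negf[symmetric])

lemma alt_faces_diff: "alt_faces (\<lambda>l. F l - F' l) xs = alt_faces F xs - alt_faces F' xs"
  by (simp add: alt_faces_def sum_subtractf[symmetric] algebra_simps)

lemma prism_op_diff: "prism_op r (\<lambda>l. F l - F' l) xs = prism_op r F xs - prism_op r F' xs"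
  by (simp add: prism_op_def sum_subtractf[symmetric] algebra_simps)

lemma alt_faces_map: "alt_faces F (map r xs) = alt_faces (\<lambda>l. F (map r l)) xs"
  by (simp add: alt_faces_def omit_def take_map drop_map map_append[symmetric] del: map_append)

lemma prism_homotopy:
  "alt_faces (prism_op r F) xs + prism_op r (alt_faces F) xs = F (map r xs) - F xs"
proof (induction xs arbitrary: F)
  case Nil
  then show ?case by simp
next
  case (Cons a xs)
  have "alt_faces (prism_op r F) (a # xs) = prism_op r F xs
      - alt_faces (\<lambda>l. F (a # r a # map r l)) xs + alt_faces (prism_op r (\<lambda>l. F (a # l))) xs"
    by (simp add: alt_faces_Cons prism_op_Cons alt_faces_diff)
  moreover have "prism_op r (alt_faces F) (a # xs) = F (r a # map r xs) - F (a # map r xs)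
      + alt_faces (\<lambda>l. F (a # r a # l)) (map r xs) - prism_op r F xs
      + prism_op r (alt_faces (\<lambda>l. F (a # l))) xs"
    by (simp add: alt_faces_Cons prism_op_Cons prism_op_diff)
  ultimately show ?case
    using Cons.IH[of "\<lambda>l. F (a # l)"] by (simp add: alt_faces_map)
qed

lemma is_coboundary_0_iff:
  "is_coboundary G p 0 f \<longleftrightarrow> (\<forall>gs \<in> tuples G 0. int p dvd f gs)"
  by (simp add: is_coboundary_def mod_eq_0_iff_dvd)

lemma is_coboundary_Suc_iff:
  "is_coboundary G p (Suc m) f \<longleftrightarrow>
     (\<exists>h. \<forall>gs \<in> tuples G (Suc m). int p dvd f gs - coboundary G m h gs)"
  by (simp add: is_coboundary_def mod_eq_0_iff_dvd)

lemma coboundary_diff: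
  "coboundary G m (\<lambda>l. h l - h' l) gs = coboundary G m h gs - coboundary G m h' gs"
  unfolding coboundary_def by (simp add: right_diff_distrib sum_subtractf sum_negf)

lemma coboundary_zero: "coboundary G m (\<lambda>l. 0) gs = 0"
  by (simp add: coboundary_def)

lemma is_coboundary_if_dvd:
  assumes "\<forall>gs \<in> tuples G n. int p dvd u gs"
  shows "is_coboundary G p n u"
proof (cases n)
  case 0
  then show ?thesis using assms by (simp add: is_coboundary_0_iff)
next
  case (Suc m)
  then show ?thesis using assms
    by (auto simp: is_coboundary_Suc_iff coboundary_zero intro!: exI[of _ "\<lambda>l. 0"])
qed

lemma is_coboundary_diff:
  assumes "is_coboundary G p n u" and "is_coboundary G p n v"
  shows "is_coboundary G p n (\<lambda>gs. u gs - v gs)"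
proof (cases n)
  case 0
  then show ?thesis using assms by (auto simp: is_coboundary_0_iff)
next
  case (Suc m)
  then obtain h h' where
      h: "\<forall>gs \<in> tuples G n. int p dvd u gs - coboundary G m h gs" and
      h': "\<forall>gs \<in> tuples G n. int p dvd v gs - coboundary G m h' gs"
    using assms by (auto simp: is_coboundary_Suc_iff)
  have "int p dvd (u gs - v gs) - coboundary G m (\<lambda>l. h l - h' l) gs"
    if "gs \<in> tuples G n" for gs
    using dvd_diff[OF h[rule_format, OF that] h'[rule_format, OF that]]
    by (simp add: coboundary_diff algebra_simps)
  then show ?thesis using Suc by (auto simp: is_coboundary_Suc_iff)
qed

lemma is_coboundary_cong:
  assumes "is_coboundary G p n u" and "\<forall>gs \<in> tuples G n. int p dvd u gs - v gs"
  shows "is_coboundary G p n v"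
  using is_coboundary_diff[OF assms(1) is_coboundary_if_dvd[OF assms(2)]] by simp

lemma cohom_class_eqI:
  assumes "is_coboundary G p n (\<lambda>gs. a gs - b gs)"
  shows "cohom_class G p n a = cohom_class G p n b"
proof -
  have "is_coboundary G p n (\<lambda>gs. b gs - a gs)"
    using is_coboundary_diff[OF is_coboundary_if_dvd[of G n p "\<lambda>_. 0"] assms] by simp
  then have "is_coboundary G p n (\<lambda>gs. a gs - g gs) \<longleftrightarrow> is_coboundary G p n (\<lambda>gs. b gs - g gs)"
    for g
    using is_coboundary_diff[OF _ assms, of "\<lambda>gs. a gs - g gs"]
      is_coboundary_diff[OF _ \<open>is_coboundary G p n (\<lambda>gs. b gs - a gs)\<close>, of "\<lambda>gs. b gs - g gs"]
    by auto
  then show ?thesis by (simp add: cohom_class_def)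
qed

lemma cocycle_in_own_class: "is_cocycle G p n f \<Longrightarrow> f \<in> cohom_class G p n f"
  by (simp add: cohom_class_def is_coboundary_if_dvd)

lemma map_hom_tuples:
  assumes "h \<in> hom K G" and "gs \<in> tuples K n"
  shows "map h gs \<in> tuples G n"
  using assms by (auto simp: tuples_def hom_in_carrier)

lemma coboundary_pullback:
  assumes h: "h \<in> hom K G" and gs: "gs \<in> tuples K (Suc n)"
  shows "coboundary K n (\<lambda>ks. u (map h ks)) gs = coboundary G n u (map h gs)"
proof -
  have len: "length gs = Suc n" and car: "set gs \<subseteq> carrier K"
    using gs by (auto simp: tuples_def)
  have "map h (take i gs @ [gs ! i \<otimes>\<^bsub>K\<^esub> gs ! (i + 1)] @ drop (i + 2) gs)
      = take i (map h gs) @ [map h gs ! i \<otimes>\<^bsub>G\<^esub> map h gs ! (i + 1)] @ drop (i + 2) (map h gs)"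
    if "i < n" for i
  proof -
    have "gs ! i \<in> carrier K" "gs ! (i + 1) \<in> carrier K"
      using len car that by auto
    then show ?thesis using len that by (simp add: take_map drop_map hom_mult[OF h])
  qed
  then show ?thesis unfolding coboundary_def by (simp add: map_tl take_map)
qed

lemma cocycle_pullback:
  assumes "is_cocycle G p n u" and "h \<in> hom K G"
  shows "is_cocycle K p n (\<lambda>ks. u (map h ks))"
  using assms unfolding is_cocycle_def
  by (simp add: coboundary_pullback map_hom_tuples)

lemma is_coboundary_pullback:
  assumes "is_coboundary G p n u" and h: "h \<in> hom K G"
  shows "is_coboundary K p n (\<lambda>ks. u (map h ks))"
proof (cases n)
  case 0
  then show ?thesis using assms by (simp add: is_coboundary_0_iff map_hom_tuples)
next
  case (Suc m)
  then obtain v where "\<forall>gs \<in> tuples G n. int p dvd u gs - coboundary G m v gs"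
    using assms(1) by (auto simp: is_coboundary_Suc_iff)
  then have "\<forall>gs \<in> tuples K n. int p dvd u (map h gs) - coboundary K m (\<lambda>ks. v (map h ks)) gs"
    using Suc by (simp add: coboundary_pullback[OF h] map_hom_tuples[OF h])
  then show ?thesis using Suc by (auto simp: is_coboundary_Suc_iff)
qed

lemma induced_cohom_class:
  assumes "is_cocycle G p n f" and h: "h \<in> hom K G"
  shows "induced p n K h G (cohom_class G p n f) = cohom_class K p n (\<lambda>ks. f (map h ks))"
proof -
  define f' where "f' = (SOME f'. is_cocycle G p n f' \<and> cohom_class G p n f = cohom_class G p n f')"
  have "is_cocycle G p n f' \<and> cohom_class G p n f = cohom_class G p n f'"
    unfolding f'_def by (rule someI[of _ f]) (simp add: assms(1))
  then have "f \<in> cohom_class G p n f'"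
    using cocycle_in_own_class[OF assms(1)] by simp
  then have "is_coboundary G p n (\<lambda>gs. f' gs - f gs)"
    by (simp add: cohom_class_def)
  from is_coboundary_pullback[OF this h]
  have "cohom_class K p n (\<lambda>ks. f' (map h ks)) = cohom_class K p n (\<lambda>ks. f (map h ks))"
    by (rule cohom_class_eqI)
  then show ?thesis unfolding induced_def f'_def[symmetric] by simp
qed

lemma HcohE:
  assumes "x \<in> Hcoh G p n"
  obtains f where "is_cocycle G p n f" and "x = cohom_class G p n f"
  using assms unfolding Hcoh_def by blast

lemma induced_in_Hcoh:
  assumes "x \<in> Hcoh G p n" and "h \<in> hom K G"
  shows "induced p n K h G x \<in> Hcoh K p n"
proof -
  obtain f where "is_cocycle G p n f" and "x = cohom_class G p n f"
    using assms(1) by (rule HcohE)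
  then show ?thesis
    using assms(2) by (auto simp: Hcoh_def induced_cohom_class cocycle_pullback)
qed

lemma induced_comp:
  assumes "x \<in> Hcoh G p n" and h: "h \<in> hom K L" and g: "g \<in> hom L G"
  shows "induced p n K h L (induced p n L g G x) = induced p n K (g \<circ> h) G x"
proof -
  obtain f where f: "is_cocycle G p n f" and x: "x = cohom_class G p n f"
    using assms(1) by (rule HcohE)
  show ?thesis
    using induced_cohom_class[OF cocycle_pullback[OF f g] h]
    by (simp add: x induced_cohom_class[OF f g] induced_cohom_class[OF f hom_compose[OF h g]])
qed

text \<open>
  A tuple \<open>[g\<^sub>1, \<dots>, g\<^sub>n]\<close> corresponds to the simplex of partial
  products \<open>[x, x g\<^sub>1, x g\<^sub>1 g\<^sub>2, \<dots>]\<close>; \<open>ratios\<close> recovers it from the quotients of consecutive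
  vertices.  Cochains \<open>f \<circ> ratios\<close> are the left-invariant homogeneous cochains.
\<close>
fun ratios :: "('g, 'b) monoid_scheme \<Rightarrow> 'g list \<Rightarrow> 'g list" where
  "ratios G (x # y # zs) = (inv\<^bsub>G\<^esub> x \<otimes>\<^bsub>G\<^esub> y) # ratios G (y # zs)"
| "ratios G _ = []"

fun partial_products :: "('g, 'b) monoid_scheme \<Rightarrow> 'g \<Rightarrow> 'g list \<Rightarrow> 'g list" where
  "partial_products G x [] = [x]"
| "partial_products G x (g # gs) = x # partial_products G (x \<otimes>\<^bsub>G\<^esub> g) gs"

context group
begin

lemma length_ratios: "length (ratios G xs) = length xs - 1"
  by (induction xs rule: induct_list012) auto

lemma ratios_carrier: "set xs \<subseteq> carrier G \<Longrightarrow> set (ratios G xs) \<subseteq> carrier G"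
  by (induction xs rule: induct_list012) auto

lemma ratios_tl: "ratios G (tl xs) = tl (ratios G xs)"
  by (induction xs rule: induct_list012) auto

lemma ratios_take: "ratios G (take (Suc k) xs) = take k (ratios G xs)"
proof (induction xs arbitrary: k rule: induct_list012)
  case (3 x y zs)
  then show ?case by (cases k) auto
qed auto

lemma ratios_omit_inner:
  assumes "Suc (Suc i) < length xs" and "set xs \<subseteq> carrier G"
  shows "ratios G (omit (Suc i) xs) = take i (ratios G xs)
           @ [ratios G xs ! i \<otimes> ratios G xs ! Suc i] @ drop (Suc (Suc i)) (ratios G xs)"
  using assms
proof (induction i arbitrary: xs)
  case 0
  then obtain a b c zs where xs: "xs = a # b # c # zs"
    by (metis Suc_less_eq length_Suc_conv less_imp_Suc_add Suc_lessE)
  have "a \<in> carrier G" "b \<in> carrier G" "c \<in> carrier G"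
    using 0 xs by auto
  then have "(inv a \<otimes> b) \<otimes> (inv b \<otimes> c) = inv a \<otimes> c"
    by (simp add: m_assoc[symmetric]) (simp add: m_assoc)
  then show ?case using xs by (simp add: omit_def)
next
  case (Suc i)
  then obtain a b zs where xs: "xs = a # b # zs"
    by (metis Suc_less_eq length_Suc_conv less_imp_Suc_add)
  have "omit (Suc (Suc i)) xs = a # b # omit i zs"
    using xs by (simp add: omit_def)
  then show ?case
    using Suc.IH[of "b # zs"] Suc.prems xs by (simp add: omit_def)
qed

lemma coboundary_ratios:
  assumes "length xs = Suc (Suc n)" and "set xs \<subseteq> carrier G"
  shows "coboundary G n f (ratios G xs) = alt_faces (\<lambda>l. f (ratios G l)) xs"
proof -
  have first: "ratios G (omit 0 xs) = tl (ratios G xs)"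
    by (simp add: omit_def drop_Suc ratios_tl)
  have last: "ratios G (omit (Suc n) xs) = take n (ratios G xs)"
    using assms(1) by (simp add: omit_def ratios_take)
  have inner: "ratios G (omit (Suc i) xs) = take i (ratios G xs)
      @ [ratios G xs ! i \<otimes> ratios G xs ! (i + 1)] @ drop (i + 2) (ratios G xs)" if "i < n" for i
    using ratios_omit_inner[of i xs] assms that by simp
  have "alt_faces (\<lambda>l. f (ratios G l)) xs
      = f (ratios G (omit 0 xs)) + (\<Sum>i<n. (-1) ^ Suc i * f (ratios G (omit (Suc i) xs)))
        + (-1) ^ Suc n * f (ratios G (omit (Suc n) xs))"
    unfolding alt_faces_def assms(1)
    by (subst sum.lessThan_Suc, subst sum.lessThan_Suc_shift) simp
  also have "\<dots> = coboundary G n f (ratios G xs)"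
    unfolding coboundary_def first last by (simp add: inner)
  finally show ?thesis by simp
qed

lemma length_partial_products: "length (partial_products G x gs) = Suc (length gs)"
  by (induction gs arbitrary: x) auto

lemma partial_products_carrier:
  "x \<in> carrier G \<Longrightarrow> set gs \<subseteq> carrier G \<Longrightarrow> set (partial_products G x gs) \<subseteq> carrier G"
  by (induction gs arbitrary: x) auto

lemma ratios_Cons_partial_products:
  "ratios G (x # partial_products G y gs) = (inv x \<otimes> y) # ratios G (partial_products G y gs)"
  by (cases gs) auto

lemma ratios_partial_products:
  "x \<in> carrier G \<Longrightarrow> set gs \<subseteq> carrier G \<Longrightarrow> ratios G (partial_products G x gs) = gs"
proof (induction gs arbitrary: x)
  case (Cons g gs)
  have "inv x \<otimes> (x \<otimes> g) = g"
    using Cons.prems by (simp add: m_assoc[symmetric])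
  then show ?case
    using Cons by (simp add: ratios_Cons_partial_products)
qed simp

lemma ratios_lmult:
  "a \<in> carrier G \<Longrightarrow> set xs \<subseteq> carrier G \<Longrightarrow> ratios G (map ((\<otimes>) a) xs) = ratios G xs"
proof (induction xs rule: induct_list012)
  case (3 x y zs)
  then show ?case by (simp add: inv_mult_group m_assoc[symmetric]) (simp add: m_assoc)
qed auto

lemma ratios_rmult:
  "t \<in> carrier G \<Longrightarrow> set xs \<subseteq> carrier G \<Longrightarrow>
    ratios G (map (\<lambda>x. x \<otimes> t) xs) = map (\<lambda>g. inv t \<otimes> g \<otimes> t) (ratios G xs)"
proof (induction xs rule: induct_list012)
  case (3 x y zs)
  then show ?case by (simp add: inv_mult_group m_assoc)
qed auto

lemma partial_products_ratios:
  "x \<in> carrier G \<Longrightarrow> set zs \<subseteq> carrier G \<Longrightarrow> partial_products G x (ratios G (x # zs)) = x # zs"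
proof (induction zs arbitrary: x)
  case (Cons y zs)
  have "x \<otimes> (inv x \<otimes> y) = y"
    using Cons.prems by (simp add: m_assoc[symmetric])
  then show ?case using Cons by simp
qed simp

lemma partial_products_one_ratios:
  assumes "xs \<noteq> []" and "set xs \<subseteq> carrier G"
  shows "partial_products G \<one> (ratios G xs) = map ((\<otimes>) (inv (hd xs))) xs"
proof -
  obtain x zs where xs: "xs = x # zs" and x: "x \<in> carrier G"
    using assms by (cases xs) auto
  have "ratios G xs = ratios G (\<one> # map ((\<otimes>) (inv x)) zs)"
    using ratios_lmult[of "inv x" xs] assms(2) xs x by simp
  then show ?thesis
    using partial_products_ratios[of \<one> "map ((\<otimes>) (inv x)) zs"] assms(2) xs x by auto
qed

lemma prism_carrier:
  assumes "set xs \<subseteq> carrier G" and "t \<in> carrier G"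
  shows "set (prism (\<lambda>x. x \<otimes> t) i xs) \<subseteq> carrier G"
  using assms by (auto simp: prism_def dest: in_set_takeD in_set_dropD)

lemma prism_op_lmult:
  assumes "a \<in> carrier G" and "set ys \<subseteq> carrier G" and "t \<in> carrier G"
  shows "prism_op (\<lambda>x. x \<otimes> t) (\<lambda>l. f (ratios G l)) (map ((\<otimes>) a) ys)
       = prism_op (\<lambda>x. x \<otimes> t) (\<lambda>l. f (ratios G l)) ys"
  unfolding prism_op_def
proof (rule sum.cong)
  fix i
  have "map (\<lambda>x. x \<otimes> t) (map ((\<otimes>) a) (drop i ys)) = map ((\<otimes>) a) (map (\<lambda>x. x \<otimes> t) (drop i ys))"
    using assms by (auto simp: m_assoc dest: in_set_dropD)
  then have "prism (\<lambda>x. x \<otimes> t) i (map ((\<otimes>) a) ys) = map ((\<otimes>) a) (prism (\<lambda>x. x \<otimes> t) i ys)"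
    by (simp add: prism_def take_map drop_map)
  then show "(- 1) ^ i * f (ratios G (prism (\<lambda>x. x \<otimes> t) i (map ((\<otimes>) a) ys)))
      = (- 1) ^ i * f (ratios G (prism (\<lambda>x. x \<otimes> t) i ys))"
    using ratios_lmult[OF assms(1) prism_carrier[OF assms(2,3)]] by simp
qed simp

lemma prism_op_partial_products_ratios:
  assumes "ys \<noteq> []" and "set ys \<subseteq> carrier G" and "t \<in> carrier G"
  shows "prism_op (\<lambda>x. x \<otimes> t) (\<lambda>l. f (ratios G l)) (partial_products G \<one> (ratios G ys))
       = prism_op (\<lambda>x. x \<otimes> t) (\<lambda>l. f (ratios G l)) ys"
proof -
  have "hd ys \<in> carrier G"
    using assms(1,2) by (cases ys) auto
  then show ?thesis
    using prism_op_lmult[OF inv_closed assms(2,3)] partial_products_one_ratios[OF assms(1,2)]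
    by simp
qed

lemma prism_op_of_cocycle_dvd:
  assumes f: "is_cocycle G p (Suc m) f" and t: "t \<in> carrier G"
    and xs: "length xs = Suc (Suc m)" "set xs \<subseteq> carrier G"
  shows "int p dvd prism_op (\<lambda>x. x \<otimes> t) (alt_faces (\<lambda>l. f (ratios G l))) xs"
  unfolding prism_op_def
proof (rule dvd_sum)
  fix i
  let ?z = "prism (\<lambda>x. x \<otimes> t) i xs"
  assume "i \<in> {..<length xs}"
  then have z: "length ?z = Suc (Suc (Suc m))" "set ?z \<subseteq> carrier G"
    using xs prism_carrier[OF xs(2) t] by (auto simp: prism_def)
  then have "ratios G ?z \<in> tuples G (Suc (Suc m))"
    by (simp add: tuples_def length_ratios ratios_carrier)
  then have "int p dvd coboundary G (Suc m) f (ratios G ?z)"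
    using f by (simp add: is_cocycle_def mod_eq_0_iff_dvd)
  then show "int p dvd (-1) ^ i * alt_faces (\<lambda>l. f (ratios G l)) ?z"
    by (simp add: coboundary_ratios[OF z])
qed

text \<open>
  Conjugation acts trivially on cohomology: for a cocycle \<open>f\<close>, the cochain
  \<open>f \<circ> conj\<^sub>t - f\<close> is the coboundary of the prism cochain of right translation by \<open>t\<close>.
\<close>
lemma conjugation_coboundary:
  assumes f: "is_cocycle G p n f" and t: "t \<in> carrier G"
  shows "is_coboundary G p n (\<lambda>gs. f (map (\<lambda>g. inv t \<otimes> g \<otimes> t) gs) - f gs)"
proof (cases n)
  case 0
  then show ?thesis by (intro is_coboundary_if_dvd) (simp add: tuples_def)
next
  case (Suc m)
  define r where "r = (\<lambda>x. x \<otimes> t)"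
  define F where "F = (\<lambda>l. f (ratios G l))"
  define h where "h = (\<lambda>gs. prism_op r F (partial_products G \<one> gs))"
  have h_ratios: "h (ratios G ys) = prism_op r F ys" if "ys \<noteq> []" "set ys \<subseteq> carrier G" for ys
    using prism_op_partial_products_ratios[OF that t] by (simp add: h_def r_def F_def)
  have "int p dvd f (map (\<lambda>g. inv t \<otimes> g \<otimes> t) gs) - f gs - coboundary G m h gs"
    if gs: "gs \<in> tuples G n" for gs
  proof -
    define xs where "xs = partial_products G \<one> gs"
    have gsc: "set gs \<subseteq> carrier G" and "length gs = Suc m"
      using gs Suc by (auto simp: tuples_def)
    then have xs: "length xs = Suc (Suc m)" "set xs \<subseteq> carrier G" and gs_eq: "ratios G xs = gs"
      by (simp_all add: xs_def length_partial_products partial_products_carrier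
          ratios_partial_products)
    have "alt_faces (\<lambda>l. h (ratios G l)) xs = alt_faces (prism_op r F) xs"
      unfolding alt_faces_def
    proof (rule sum.cong)
      fix j assume "j \<in> {..<length xs}"
      then have "omit j xs \<noteq> []" "set (omit j xs) \<subseteq> carrier G"
        using xs by (auto simp: omit_def dest: in_set_takeD in_set_dropD)
      then show "(-1) ^ j * h (ratios G (omit j xs)) = (-1) ^ j * prism_op r F (omit j xs)"
        by (simp add: h_ratios)
    qed simp
    then have "coboundary G m h gs = F (map r xs) - F xs - prism_op r (alt_faces F) xs"
      using coboundary_ratios[OF xs] prism_homotopy[of r F xs] gs_eq by simp
    moreover have "F (map r xs) = f (map (\<lambda>g. inv t \<otimes> g \<otimes> t) gs)" and "F xs = f gs"
      using ratios_rmult[OF t xs(2)] gs_eq by (simp_all add: F_def r_def)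
    moreover have "int p dvd prism_op r (alt_faces F) xs"
      using prism_op_of_cocycle_dvd[OF _ t xs] f Suc by (simp add: r_def F_def)
    ultimately show ?thesis by simp
  qed
  then show ?thesis using Suc by (auto simp: is_coboundary_Suc_iff)
qed

lemma induced_conjugate_eq:
  assumes x: "x \<in> Hcoh G p n" and h1: "h1 \<in> hom K G" and h2: "h2 \<in> hom K G"
    and t: "t \<in> carrier G" and conj: "\<forall>k \<in> carrier K. t \<otimes> h1 k = h2 k \<otimes> t"
  shows "induced p n K h2 G x = induced p n K h1 G x"
proof -
  obtain f where f: "is_cocycle G p n f" and x_eq: "x = cohom_class G p n f"
    using x by (rule HcohE)
  let ?c = "\<lambda>g. inv (inv t) \<otimes> g \<otimes> inv t"
  have h2_eq: "h2 k = ?c (h1 k)" if k: "k \<in> carrier K" for k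
  proof -
    have "h1 k \<in> carrier G" "h2 k \<in> carrier G"
      using hom_in_carrier[OF h1 k] hom_in_carrier[OF h2 k] .
    then show ?thesis
      using conj k t by (metis inv_closed inv_inv m_assoc m_closed r_inv r_one)
  qed
  have "is_coboundary K p n (\<lambda>ks. f (map ?c (map h1 ks)) - f (map h1 ks))"
    using is_coboundary_pullback[OF conjugation_coboundary[OF f inv_closed[OF t]] h1] by simp
  then have "is_coboundary K p n (\<lambda>ks. f (map h2 ks) - f (map h1 ks))"
  proof (rule is_coboundary_cong, intro ballI)
    fix ks assume "ks \<in> tuples K n"
    then have h2_ks: "map h2 ks = map ?c (map h1 ks)"
      using h2_eq by (auto simp: tuples_def)
    show "int p dvd f (map ?c (map h1 ks)) - f (map h1 ks) - (f (map h2 ks) - f (map h1 ks))"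
      unfolding h2_ks by simp
  qed
  then show ?thesis
    unfolding x_eq induced_cohom_class[OF f h1] induced_cohom_class[OF f h2]
    by (rule cohom_class_eqI)
qed

lemma rcoset_some_elem:
  assumes H: "subgroup H G" and C: "C \<in> rcosets H"
  shows "some_elem C \<in> carrier G" and "H #> some_elem C = C"
proof -
  obtain y where y: "y \<in> carrier G" "C = H #> y"
    using C unfolding RCOSETS_def by blast
  have elem: "some_elem C \<in> H #> y"
    using some_elem_nonempty[of "H #> y"] rcos_self[OF y(1) H] y(2) by auto
  then show "some_elem C \<in> carrier G"
    using r_coset_subset_G[OF subgroup.subset[OF H] y(1)] by blast
  show "H #> some_elem C = C"
    using repr_independence[OF elem y(1) H] y(2) by simp
qed

lemma rcoset_some_elem_quotient:
  assumes H: "subgroup H G" and x: "x \<in> carrier G"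
  shows "x \<otimes> inv (some_elem (H #> x)) \<in> H"
proof -
  have "some_elem (H #> x) \<in> H #> x"
    using some_elem_nonempty[of "H #> x"] rcos_self[OF x H] by auto
  then obtain h where h: "h \<in> H" "some_elem (H #> x) = h \<otimes> x"
    unfolding r_coset_def by auto
  moreover have "h \<in> carrier G"
    using h(1) subgroup.mem_carrier[OF H] by blast
  ultimately have "x \<otimes> inv (some_elem (H #> x)) = inv h"
    using x by (simp add: inv_mult_group m_assoc[symmetric])
  then show ?thesis
    using h subgroup.m_inv_closed[OF H] by simp
qed

lemma rcoset_mult_left:
  assumes H: "subgroup H G" and h: "h \<in> H" and x: "x \<in> carrier G"
  shows "H #> (h \<otimes> x) = H #> x"
  using coset_mult_assoc[OF subgroup.subset[OF H] subgroup.mem_carrier[OF H h] x]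
    coset_join2[OF subgroup.mem_carrier[OF H h] H h] by simp

text \<open>
  By Lagrange, a subgroup and its injective image have equally many right cosets.
\<close>
lemma card_rcosets_image:
  assumes "finite (carrier G)" and Q: "subgroup Q G" and R: "subgroup (\<phi> ` Q) G"
    and "inj_on \<phi> Q"
  shows "card (rcosets Q) = card (rcosets (\<phi> ` Q))"
proof -
  have "card Q > 0"
    using assms(1) subgroup.subset[OF Q] subgroup.one_closed[OF Q]
    by (auto simp: card_gt_0_iff intro: finite_subset)
  moreover have "card (rcosets Q) * card Q = card (rcosets (\<phi> ` Q)) * card Q"
    using lagrange[OF Q] lagrange[OF R] card_image[OF assms(4)] by simp
  ultimately show ?thesis by simp
qed

definition coset_transfer :: "'a set \<Rightarrow> ('a \<Rightarrow> 'a) \<Rightarrow> ('a set \<Rightarrow> 'a set) \<Rightarrow> 'a \<Rightarrow> 'a" where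
  "coset_transfer Q \<phi> \<beta> x = \<phi> (x \<otimes> inv (some_elem (Q #> x))) \<otimes> some_elem (\<beta> (Q #> x))"

context
  fixes Q :: "'a set" and \<phi> :: "'a \<Rightarrow> 'a" and \<beta> :: "'a set \<Rightarrow> 'a set"
  assumes Q: "subgroup Q G" and R: "subgroup (\<phi> ` Q) G"
    and \<phi>_mult: "\<forall>x \<in> Q. \<forall>y \<in> Q. \<phi> (x \<otimes> y) = \<phi> x \<otimes> \<phi> y" and \<phi>_inj: "inj_on \<phi> Q"
    and \<beta>: "bij_betw \<beta> (rcosets Q) (rcosets (\<phi> ` Q))"
begin

lemma transfer_target:
  assumes "x \<in> carrier G"
  shows "some_elem (\<beta> (Q #> x)) \<in> carrier G"
    and "\<phi> ` Q #> some_elem (\<beta> (Q #> x)) = \<beta> (Q #> x)"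
  using rcoset_some_elem[OF R bij_betw_apply[OF \<beta> rcosetsI[OF subgroup.subset[OF Q] assms]]]
  by auto

lemma coset_transfer_mem:
  assumes x: "x \<in> carrier G"
  shows "coset_transfer Q \<phi> \<beta> x \<in> \<beta> (Q #> x)" and "coset_transfer Q \<phi> \<beta> x \<in> carrier G"
proof -
  have "\<phi> (x \<otimes> inv (some_elem (Q #> x))) \<in> \<phi> ` Q"
    using rcoset_some_elem_quotient[OF Q x] by blast
  then show "coset_transfer Q \<phi> \<beta> x \<in> \<beta> (Q #> x)"
    using rcosI[OF _ subgroup.subset[OF R] transfer_target(1)[OF x]] transfer_target(2)[OF x]
    unfolding coset_transfer_def by metis
  then show "coset_transfer Q \<phi> \<beta> x \<in> carrier G"
    using transfer_target[OF x] r_coset_subset_G[OF subgroup.subset[OF R]] by blast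
qed

lemma coset_transfer_equivariant:
  assumes q: "q \<in> Q" and x: "x \<in> carrier G"
  shows "coset_transfer Q \<phi> \<beta> (q \<otimes> x) = \<phi> q \<otimes> coset_transfer Q \<phi> \<beta> x"
proof -
  let ?r = "some_elem (Q #> x)"
  have co: "Q #> (q \<otimes> x) = Q #> x"
    by (rule rcoset_mult_left[OF Q q x])
  have rc: "?r \<in> carrier G"
    using rcoset_some_elem(1)[OF Q rcosetsI[OF subgroup.subset[OF Q] x]] .
  have u: "x \<otimes> inv ?r \<in> Q"
    by (rule rcoset_some_elem_quotient[OF Q x])
  have "\<phi> (q \<otimes> x \<otimes> inv ?r) = \<phi> q \<otimes> \<phi> (x \<otimes> inv ?r)"
    using \<phi>_mult q u subgroup.mem_carrier[OF Q q] x rc by (simp add: m_assoc)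
  moreover have "\<phi> q \<in> carrier G" "\<phi> (x \<otimes> inv ?r) \<in> carrier G"
    using q u subgroup.subset[OF R] by auto
  ultimately show ?thesis
    unfolding coset_transfer_def co using transfer_target(1)[OF x] by (simp add: m_assoc)
qed

lemma coset_transfer_inj: "inj_on (coset_transfer Q \<phi> \<beta>) (carrier G)"
proof (rule inj_onI)
  fix x y
  assume x: "x \<in> carrier G" and y: "y \<in> carrier G"
    and eq: "coset_transfer Q \<phi> \<beta> x = coset_transfer Q \<phi> \<beta> y"
  have Qx: "Q #> x \<in> rcosets Q" and Qy: "Q #> y \<in> rcosets Q"
    using rcosetsI[OF subgroup.subset[OF Q]] x y by auto
  have "\<beta> (Q #> x) = \<beta> (Q #> y)"
  proof (rule ccontr)
    assume "\<beta> (Q #> x) \<noteq> \<beta> (Q #> y)"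
    then have "disjnt (\<beta> (Q #> x)) (\<beta> (Q #> y))"
      using rcos_disjoint[OF R] bij_betw_apply[OF \<beta> Qx] bij_betw_apply[OF \<beta> Qy]
      unfolding pairwise_def by blast
    then show False
      using coset_transfer_mem(1)[OF x] coset_transfer_mem(1)[OF y] eq
      unfolding disjnt_def by auto
  qed
  then have co: "Q #> x = Q #> y"
    using bij_betw_imp_inj_on[OF \<beta>] Qx Qy by (auto dest: inj_onD)
  let ?r = "some_elem (Q #> x)"
  have rc: "?r \<in> carrier G"
    using rcoset_some_elem(1)[OF Q Qx] .
  have ux: "x \<otimes> inv ?r \<in> Q" and uy: "y \<otimes> inv ?r \<in> Q"
    using rcoset_some_elem_quotient[OF Q x] rcoset_some_elem_quotient[OF Q y] co by auto
  then have "\<phi> (x \<otimes> inv ?r) \<in> carrier G" "\<phi> (y \<otimes> inv ?r) \<in> carrier G"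
    using subgroup.subset[OF R] by auto
  then have "\<phi> (x \<otimes> inv ?r) = \<phi> (y \<otimes> inv ?r)"
    using eq co transfer_target(1)[OF x] unfolding coset_transfer_def by simp
  then have "x \<otimes> inv ?r = y \<otimes> inv ?r"
    using \<phi>_inj ux uy by (auto dest: inj_onD)
  then show "x = y"
    using x y rc by simp
qed

end

lemma equivariant_bijection:
  assumes fin: "finite (carrier G)" and Q: "subgroup Q G" and R: "subgroup (\<phi> ` Q) G"
    and \<phi>_mult: "\<forall>x \<in> Q. \<forall>y \<in> Q. \<phi> (x \<otimes> y) = \<phi> x \<otimes> \<phi> y" and \<phi>_inj: "inj_on \<phi> Q"
  obtains \<psi> where "bij_betw \<psi> (carrier G) (carrier G)"
    and "\<And>q x. q \<in> Q \<Longrightarrow> x \<in> carrier G \<Longrightarrow> \<psi> (q \<otimes> x) = \<phi> q \<otimes> \<psi> x"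
proof -
  have "finite (rcosets Q)" "finite (rcosets (\<phi> ` Q))"
    using rcosets_subset_PowG[OF Q] rcosets_subset_PowG[OF R] fin finite_subset by blast+
  then obtain \<beta> where \<beta>: "bij_betw \<beta> (rcosets Q) (rcosets (\<phi> ` Q))"
    using finite_same_card_bij card_rcosets_image[OF fin Q R \<phi>_inj] by blast
  let ?\<psi> = "coset_transfer Q \<phi> \<beta>"
  have "?\<psi> ` carrier G = carrier G"
    using endo_inj_surj[OF fin _ coset_transfer_inj[OF Q R \<phi>_mult \<phi>_inj \<beta>]]
      coset_transfer_mem(2)[OF Q R \<phi>_mult \<phi>_inj \<beta>] by blast
  then show ?thesis
    using that[of ?\<psi>] coset_transfer_inj[OF Q R \<phi>_mult \<phi>_inj \<beta>]
      coset_transfer_equivariant[OF Q R \<phi>_mult \<phi>_inj \<beta>] by (simp add: bij_betw_def)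
qed

end

definition transport :: "'g set \<Rightarrow> ('g \<Rightarrow> 'a) \<Rightarrow> 'a set \<Rightarrow> ('g \<Rightarrow> 'g) \<Rightarrow> 'a \<Rightarrow> 'a" where
  "transport A e S \<psi> = restrict (\<lambda>s. e (\<psi> (inv_into A e s))) S"

lemma cayley_eq_transport: "cayley P e S g = transport (carrier P) e S (\<lambda>x. g \<otimes>\<^bsub>P\<^esub> x)"
  by (simp add: cayley_def transport_def)

context
  fixes A :: "'g set" and e :: "'g \<Rightarrow> 'a" and S :: "'a set"
  assumes e: "bij_betw e A S"
begin

lemma transport_apply: "x \<in> A \<Longrightarrow> transport A e S \<psi> (e x) = e (\<psi> x)"
  using e by (simp add: transport_def bij_betw_apply bij_betw_imp_inj_on)

lemma transport_cong:
  "(\<And>x. x \<in> A \<Longrightarrow> \<psi> x = \<psi>' x) \<Longrightarrow> transport A e S \<psi> = transport A e S \<psi>'"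
  using e unfolding transport_def bij_betw_def by (auto intro!: restrict_ext inv_into_into)

lemma transport_Bij:
  assumes "bij_betw \<psi> A A"
  shows "transport A e S \<psi> \<in> Bij S"
proof -
  have "bij_betw (e \<circ> \<psi> \<circ> inv_into A e) S S"
    using bij_betw_trans[OF bij_betw_inv_into[OF e] bij_betw_trans[OF assms e]]
    by (simp add: comp_assoc)
  then have "bij_betw (transport A e S \<psi>) S S"
    unfolding transport_def by (rule bij_betw_cong[THEN iffD1, rotated]) simp
  then show ?thesis by (simp add: Bij_def transport_def)
qed

lemma transport_compose:
  assumes "\<psi>' ` A \<subseteq> A"
  shows "compose S (transport A e S \<psi>) (transport A e S \<psi>') = transport A e S (\<psi> \<circ> \<psi>')"
proof
  fix s
  show "compose S (transport A e S \<psi>) (transport A e S \<psi>') s = transport A e S (\<psi> \<circ> \<psi>') s"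
  proof (cases "s \<in> S")
    case True
    then obtain x where "x \<in> A" "s = e x"
      using e by (auto simp: bij_betw_def)
    then show ?thesis
      using assms True by (simp add: compose_def transport_apply image_subset_iff)
  next
    case False
    then show ?thesis by (simp add: compose_def transport_def)
  qed
qed

end

lemma (in group) left_mult_bij: "g \<in> carrier G \<Longrightarrow> bij_betw (\<lambda>x. g \<otimes> x) (carrier G) (carrier G)"
  by (simp add: bij_betw_def inj_on_cmult surj_const_mult)

lemma (in group) cayley_hom:
  assumes e: "bij_betw e (carrier G) S"
  shows "cayley G e S \<in> hom G (BijGroup S)"
proof (rule homI)
  fix g assume "g \<in> carrier G"
  then show "cayley G e S g \<in> carrier (BijGroup S)"
    unfolding cayley_eq_transport by (simp add: BijGroup_def transport_Bij[OF e] left_mult_bij)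
next
  fix g h assume g: "g \<in> carrier G" and h: "h \<in> carrier G"
  have "transport (carrier G) e S (\<lambda>x. (g \<otimes> h) \<otimes> x)
      = transport (carrier G) e S ((\<lambda>x. g \<otimes> x) \<circ> (\<lambda>x. h \<otimes> x))"
    using g h by (intro transport_cong[OF e]) (simp add: m_assoc)
  also have "\<dots> = compose S (transport (carrier G) e S (\<lambda>x. g \<otimes> x))
      (transport (carrier G) e S (\<lambda>x. h \<otimes> x))"
    using h by (intro transport_compose[OF e, symmetric]) auto
  finally show "cayley G e S (g \<otimes> h) = cayley G e S g \<otimes>\<^bsub>BijGroup S\<^esub> cayley G e S h"
    using g h unfolding cayley_eq_transport
    by (simp add: BijGroup_def transport_Bij[OF e] left_mult_bij)
qed

lemma subgroup_inclusion_hom: "subgroup H G \<Longrightarrow> id \<in> hom (G\<lparr>carrier := H\<rparr>) G"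
  using subgroup.subset by (fastforce simp: hom_def)

lemma hom_into_subgroup: "subgroup H G \<Longrightarrow> \<phi> \<in> hom K (G\<lparr>carrier := H\<rparr>) \<Longrightarrow> \<phi> \<in> hom K G"
  using subgroup.subset by (fastforce simp: hom_def)

lemma (in group) image_subgroup:
  assumes Q: "subgroup Q G" and \<phi>: "\<phi> \<in> hom (G\<lparr>carrier := Q\<rparr>) G"
  shows "subgroup (\<phi> ` Q) G"
proof -
  have "group_hom (G\<lparr>carrier := Q\<rparr>) G \<phi>"
    using subgroup.subgroup_is_group[OF Q is_group] is_group \<phi>
    by (simp add: group_hom_def group_hom_axioms_def)
  then show ?thesis
    using group_hom.img_is_subgroup by fastforce
qed

text \<open>
  The group-theoretic core: \<open>c|Q\<close> and \<open>c \<circ> \<phi>\<close> are conjugate in \<open>BijGroup S\<close>, by the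
  transport of an equivariant bijection.
\<close>
lemma (in group) cayley_conjugate:
  assumes fin: "finite (carrier G)" and e: "bij_betw e (carrier G) S" and Q: "subgroup Q G"
    and \<phi>: "\<phi> \<in> hom (G\<lparr>carrier := Q\<rparr>) G" and \<phi>_inj: "inj_on \<phi> Q"
  obtains \<tau> where "\<tau> \<in> carrier (BijGroup S)"
    and "\<forall>q \<in> Q. \<tau> \<otimes>\<^bsub>BijGroup S\<^esub> cayley G e S q = cayley G e S (\<phi> q) \<otimes>\<^bsub>BijGroup S\<^esub> \<tau>"
proof -
  have \<phi>_mult: "\<forall>x \<in> Q. \<forall>y \<in> Q. \<phi> (x \<otimes> y) = \<phi> x \<otimes> \<phi> y"
    using \<phi> by (simp add: hom_def)
  obtain \<psi> where \<psi>: "bij_betw \<psi> (carrier G) (carrier G)"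
    and equi: "\<And>q x. q \<in> Q \<Longrightarrow> x \<in> carrier G \<Longrightarrow> \<psi> (q \<otimes> x) = \<phi> q \<otimes> \<psi> x"
    using equivariant_bijection[OF fin Q image_subgroup[OF Q \<phi>] \<phi>_mult \<phi>_inj] by blast
  let ?\<tau> = "transport (carrier G) e S \<psi>" and ?c = "cayley G e S"
  have \<tau>: "?\<tau> \<in> carrier (BijGroup S)"
    using transport_Bij[OF e \<psi>] by (simp add: BijGroup_def)
  have "?\<tau> \<otimes>\<^bsub>BijGroup S\<^esub> ?c q = ?c (\<phi> q) \<otimes>\<^bsub>BijGroup S\<^esub> ?\<tau>" if q: "q \<in> Q" for q
  proof -
    have qc: "q \<in> carrier G" and \<phi>q: "\<phi> q \<in> carrier G"
      using q subgroup.subset[OF Q] hom_in_carrier[OF \<phi>] by auto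
    have "compose S ?\<tau> (?c q) = transport (carrier G) e S (\<psi> \<circ> (\<lambda>x. q \<otimes> x))"
      unfolding cayley_eq_transport using qc by (intro transport_compose[OF e]) auto
    also have "\<dots> = transport (carrier G) e S ((\<lambda>x. \<phi> q \<otimes> x) \<circ> \<psi>)"
      using q by (intro transport_cong[OF e]) (simp add: equi)
    also have "\<dots> = compose S (?c (\<phi> q)) ?\<tau>"
      unfolding cayley_eq_transport using \<psi>
      by (intro transport_compose[OF e, symmetric]) (simp add: bij_betw_def)
    finally show ?thesis
      using \<tau> hom_in_carrier[OF cayley_hom[OF e]] qc \<phi>q by (simp add: BijGroup_def)
  qed
  then show ?thesis using that \<tau> by blast
qed

text \<open>
  The restriction to \<open>Q\<close> of a class pulled back along the Cayley embedding is stable under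
  every injective homomorphism \<open>\<phi> : Q \<rightarrow> Q'\<close>: both sides are the pullbacks along the conjugate
  homomorphisms \<open>c|Q\<close> and \<open>c \<circ> \<phi>\<close>.
\<close>
lemma (in group) Res_cayley_stable:
  assumes fin: "finite (carrier G)" and e: "bij_betw e (carrier G) S"
    and x: "x \<in> Hcoh (BijGroup S) p n" and Q: "subgroup Q G" and Q': "subgroup Q' G"
    and \<phi>: "\<phi> \<in> hom (G\<lparr>carrier := Q\<rparr>) (G\<lparr>carrier := Q'\<rparr>)" and \<phi>_inj: "inj_on \<phi> Q"
  defines "z \<equiv> induced p n G (cayley G e S) (BijGroup S) x"
  shows "induced p n (G\<lparr>carrier := Q\<rparr>) \<phi> (G\<lparr>carrier := Q'\<rparr>) (Res p n G Q' z) = Res p n G Q z"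
proof -
  let ?c = "cayley G e S" and ?B = "BijGroup S"
  have c: "?c \<in> hom G ?B"
    by (rule cayley_hom[OF e])
  have cQ: "?c \<in> hom (G\<lparr>carrier := Q\<rparr>) ?B" and cQ': "?c \<in> hom (G\<lparr>carrier := Q'\<rparr>) ?B"
    using Group.hom_compose[OF subgroup_inclusion_hom[OF Q] c]
      Group.hom_compose[OF subgroup_inclusion_hom[OF Q'] c] by simp_all
  have \<phi>G: "\<phi> \<in> hom (G\<lparr>carrier := Q\<rparr>) G"
    by (rule hom_into_subgroup[OF Q' \<phi>])
  obtain \<tau> where \<tau>: "\<tau> \<in> carrier ?B" and conj: "\<forall>q \<in> Q. \<tau> \<otimes>\<^bsub>?B\<^esub> ?c q = ?c (\<phi> q) \<otimes>\<^bsub>?B\<^esub> \<tau>"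
    using cayley_conjugate[OF fin e Q \<phi>G \<phi>_inj] by blast
  have "induced p n (G\<lparr>carrier := Q\<rparr>) \<phi> (G\<lparr>carrier := Q'\<rparr>) (Res p n G Q' z)
      = induced p n (G\<lparr>carrier := Q\<rparr>) (?c \<circ> \<phi>) ?B x"
    unfolding Res_def z_def
    using induced_comp[OF x subgroup_inclusion_hom[OF Q'] c] induced_comp[OF x \<phi> cQ'] by simp
  also have "\<dots> = induced p n (G\<lparr>carrier := Q\<rparr>) ?c ?B x"
    using group.induced_conjugate_eq[OF group_BijGroup x cQ Group.hom_compose[OF \<phi>G c] \<tau>] conj by simp
  also have "\<dots> = Res p n G Q z"
    unfolding Res_def z_def using induced_comp[OF x subgroup_inclusion_hom[OF Q] c] by simp
  finally show ?thesis .
qed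

theorem theorem3:
  fixes P :: "('g, 'b) monoid_scheme" and p :: nat and S :: "'a set" and e :: "'g \<Rightarrow> 'a"
  assumes "Factorial_Ring.prime p"
    and "group P" and "finite (carrier P)" and "\<exists>k. order P = p ^ k"
    and "bij_betw e (carrier P) S"
  shows "\<forall>n. induced p n P (cayley P e S) (BijGroup S) ` Hcoh (BijGroup S) p n \<subseteq> I_Cu P p n"
proof (intro allI subsetI)
  interpret P: group P by fact
  fix n z
  assume "z \<in> induced p n P (cayley P e S) (BijGroup S) ` Hcoh (BijGroup S) p n"
  then obtain x where x: "x \<in> Hcoh (BijGroup S) p n"
    and z: "z = induced p n P (cayley P e S) (BijGroup S) x" by blast
  have "z \<in> Hcoh P p n"
    unfolding z by (rule induced_in_Hcoh[OF x P.cayley_hom[OF assms(5)]])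
  then show "z \<in> I_Cu P p n"
    unfolding I_Cu_def z using P.Res_cayley_stable[OF assms(3,5) x] by blast
qed

end
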